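(* Let $\xi=e^{i\pi/5}$. Let $n\ge3$ and let $(n_0,\dots,n_9)\in\mathbb{N}_0^{10}$ with $\sum_{j=0}^9 n_j=n$ and $\sum_{j=0}^9 n_j\xi^j\in\mathbb{R}$. Then there exist $(m_0,\dots,m_9),(k_0,\dots,k_9)\in\mathbb{N}_0^{10}$, neither identically zero, with $m_j+k_j=n_j$ for all $j$, such that $\sum_j m_j\xi^j\in\mathbb{R}$ and $\sum_j k_j\xi^j\in\mathbb{R}$. In other words, no real-valued combination of $n\ge3$ tenth roots of unity (counted with multiplicity) is nontrivial.
   Context: A combination $\sum_j n_j\xi^j$ ($n_j\in\mathbb{N}_0$) with real value is called reducible if its multiset of roots can be split into two nonempty sub-multisets each having real sum, and nontrivial otherwise; $\sum_j n_j$ is its level. *)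

theory Defs
  imports "HOL-Analysis.Analysis"
begin

definition xi :: complex where
  "xi = cis (pi / 5)"

definition comb :: "(nat \<Rightarrow> nat) \<Rightarrow> complex" where
  "comb c = (\<Sum>j<10. of_nat (c j) * xi ^ j)"

end

theory Submission
  imports Defs
begin

text \<open>
  The imaginary part of \<open>\<Sum>j. c\<^sub>j \<xi>\<^sup>j\<close> is
  \<open>(c\<^sub>1 + c\<^sub>4 - c\<^sub>6 - c\<^sub>9) sin(\<pi>/5) + (c\<^sub>2 + c\<^sub>3 - c\<^sub>7 - c\<^sub>8) sin(2\<pi>/5)\<close>,
  and \<open>sin(2\<pi>/5) / sin(\<pi>/5) = 2 cos(\<pi>/5)\<close> is the golden ratio, which is irrational.
  So a real combination takes as many roots from \<open>{\<xi>, \<xi>\<^sup>4}\<close> as from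
  \<open>{\<xi>\<^sup>6, \<xi>\<^sup>9}\<close>, and as many from \<open>{\<xi>\<^sup>2, \<xi>\<^sup>3}\<close> as from \<open>{\<xi>\<^sup>7, \<xi>\<^sup>8}\<close>.
  Hence it contains one of the real roots \<open>\<plusminus>1\<close>, or two roots with opposite imaginary
  parts; splitting these off leaves a nonempty real remainder as soon as there are at least
  three roots.
\<close>

lemma golden_ratio_not_Rats:
  fixes x :: real
  assumes "x\<^sup>2 = x + 1"
  shows "x \<notin> \<rat>"
proof
  assume "x \<in> \<rat>"
  then obtain p q :: int where q: "q > 0" "coprime p q" and x: "x = of_int p / of_int q"
    by (elim Rats_cases')
  have "real_of_int (p\<^sup>2) = of_int (q * (p + q))"
    using assms q(1) unfolding x by (simp add: field_simps power2_eq_square)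
  then have pq: "p\<^sup>2 = q * (p + q)"
    by linarith
  have "coprime q (p\<^sup>2)"
    using q(2) by (simp add: coprime_commute)
  then have "is_unit q"
    using pq by (metis coprime_common_divisor dvd_refl dvd_triv_left)
  then have "q = 1"
    using q(1) by simp
  then have "p * (p - 1) = 1"
    using pq by (simp add: algebra_simps power2_eq_square)
  then show False
    by (metis even_mult_iff odd_one even_diff_iff even_plus_one_iff)
qed

lemma two_cos_pi_div_5_golden: "(2 * cos (pi / 5))\<^sup>2 = 2 * cos (pi / 5) + 1"
proof -
  define c where "c = cos (pi / 5)"
  have "cos (3 * (pi / 5)) = cos (pi - 2 * (pi / 5))"
    by (simp add: field_simps)
  then have "4 * c ^ 3 - 3 * c = - (2 * c\<^sup>2 - 1)"
    unfolding cos_treble_cos cos_pi_minus cos_double_cos c_def by simp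
  then have "(c + 1) * ((2 * c)\<^sup>2 - 2 * c - 1) = 0"
    by (simp add: algebra_simps power2_eq_square power3_eq_cube)
  moreover have "c > 0"
    unfolding c_def by (rule cos_gt_zero_pi) (use pi_gt_zero in linarith)+
  ultimately show ?thesis
    unfolding c_def[symmetric] by simp
qed

lemma sin_pi_div_5_independent:
  fixes A B :: int
  assumes "A * sin (pi / 5) + B * sin (2 * pi / 5) = 0"
  shows "A = 0 \<and> B = 0"
proof -
  define x where "x = 2 * cos (pi / 5)"
  have "sin (2 * pi / 5) = x * sin (pi / 5)"
    using sin_double[of "pi / 5"] unfolding x_def by simp
  then have "sin (pi / 5) * (A + B * x) = 0"
    using assms by (simp add: algebra_simps)
  moreover have "sin (pi / 5) > 0"
    by (rule sin_gt_zero) auto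
  ultimately have lin: "A + B * x = 0"
    by simp
  have "B = 0"
  proof (rule ccontr)
    assume "B \<noteq> 0"
    then have "x = - of_int A / of_int B"
      using lin by (simp add: field_simps)
    then have "x \<in> \<rat>"
      by simp
    then show False
      using golden_ratio_not_Rats two_cos_pi_div_5_golden unfolding x_def by blast
  qed
  with lin show ?thesis
    by simp
qed

lemma xi_pow_5: "xi ^ 5 = -1"
  by (simp add: xi_def Complex.DeMoivre)

lemma Im_xi_pow: "Im (xi ^ j) = sin (real j * pi / 5)"
  by (simp add: xi_def Complex.DeMoivre)

lemma Im_xi_pow_add_5: "Im (xi ^ (j + 5)) = - Im (xi ^ j)"
  by (simp add: power_add xi_pow_5)

lemma Im_xi_pow_5_minus: "j \<le> 5 \<Longrightarrow> Im (xi ^ (5 - j)) = Im (xi ^ j)"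
proof -
  assume "j \<le> 5"
  then have "real (5 - j) * pi / 5 = pi - real j * pi / 5"
    by (simp add: of_nat_diff field_simps)
  then show ?thesis
    by (simp only: Im_xi_pow sin_pi_minus)
qed

lemma Im_xi_pow_table:
  "Im (xi ^ 0) = 0" "Im xi = sin (pi / 5)" "Im (xi ^ 2) = sin (2 * pi / 5)"
  "Im (xi ^ 3) = sin (2 * pi / 5)" "Im (xi ^ 4) = sin (pi / 5)" "Im (xi ^ 5) = 0"
  "Im (xi ^ 6) = - sin (pi / 5)" "Im (xi ^ 7) = - sin (2 * pi / 5)"
  "Im (xi ^ 8) = - sin (2 * pi / 5)" "Im (xi ^ 9) = - sin (pi / 5)"
  using Im_xi_pow[of 1] Im_xi_pow[of 2] Im_xi_pow_5_minus[of 1] Im_xi_pow_5_minus[of 2]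
    Im_xi_pow_add_5[of 1] Im_xi_pow_add_5[of 2] Im_xi_pow_add_5[of 3] Im_xi_pow_add_5[of 4]
  by (simp_all add: xi_pow_5 del: power_Suc)

lemma sum_lessThan_10:
  fixes f :: "nat \<Rightarrow> 'a :: comm_monoid_add"
  shows "(\<Sum>j<10. f j) = f 0 + f 1 + f 2 + f 3 + f 4 + f 5 + f 6 + f 7 + f 8 + f 9"
  by (simp add: eval_nat_numeral ac_simps)

lemma Im_comb:
  "Im (comb c) = (real (c 1) + real (c 4) - real (c 6) - real (c 9)) * sin (pi / 5)
     + (real (c 2) + real (c 3) - real (c 7) - real (c 8)) * sin (2 * pi / 5)"
  unfolding comb_def Im_sum sum_lessThan_10
  by (simp add: Im_xi_pow_table algebra_simps del: power_Suc)

lemma comb_in_Reals_iff: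
  "comb c \<in> \<real> \<longleftrightarrow> c 1 + c 4 = c 6 + c 9 \<and> c 2 + c 3 = c 7 + c 8"
proof -
  have "comb c \<in> \<real> \<longleftrightarrow>
      of_int (int (c 1) + c 4 - c 6 - c 9) * sin (pi / 5)
      + of_int (int (c 2) + c 3 - c 7 - c 8) * sin (2 * pi / 5) = 0"
    by (simp add: complex_is_Real_iff Im_comb)
  also have "\<dots> \<longleftrightarrow> int (c 1) + c 4 - c 6 - c 9 = 0 \<and> int (c 2) + c 3 - c 7 - c 8 = 0"
    by (metis sin_pi_div_5_independent of_int_0 mult_zero_left add_0)
  also have "\<dots> \<longleftrightarrow> c 1 + c 4 = c 6 + c 9 \<and> c 2 + c 3 = c 7 + c 8"
    by auto
  finally show ?thesis .
qed

definition reducible :: "(nat \<Rightarrow> nat) \<Rightarrow> bool" where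
  "reducible nn \<longleftrightarrow> (\<exists>m k.
     (\<exists>j<10. m j \<noteq> 0) \<and> (\<exists>j<10. k j \<noteq> 0) \<and>
     (\<forall>j<10. m j + k j = nn j) \<and> comb m \<in> \<real> \<and> comb k \<in> \<real>)"

lemma comb_diff:
  assumes "\<forall>j<10. m j \<le> nn j"
  shows "comb (\<lambda>j. nn j - m j) = comb nn - comb m"
  unfolding comb_def using assms by (simp add: of_nat_diff left_diff_distrib sum_subtractf)

lemma comb_indicator:
  assumes "S \<subseteq> {..<10}"
  shows "comb (\<lambda>j. of_bool (j \<in> S)) = (\<Sum>j\<in>S. xi ^ j)"
proof -
  have "{..<10} \<inter> {j. j \<in> S} = S"
    using assms by blast
  then show ?thesis
    unfolding comb_def by simp
qed

lemma reducibleI: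
  assumes "\<forall>j<10. m j \<le> nn j" and "\<exists>j<10. m j \<noteq> 0"
    and "(\<Sum>j<10. m j) < (\<Sum>j<10. nn j)"
    and "comb m \<in> \<real>" and "comb nn \<in> \<real>"
  shows "reducible nn"
proof -
  define k where "k j = nn j - m j" for j
  have split: "\<forall>j<10. m j + k j = nn j"
    using assms(1) unfolding k_def by auto
  have "comb k \<in> \<real>"
    unfolding k_def comb_diff[OF assms(1)] using assms(4,5) by (intro Reals_diff)
  moreover have "\<exists>j<10. k j \<noteq> 0"
  proof (rule ccontr)
    assume "\<not> (\<exists>j<10. k j \<noteq> 0)"
    then have "(\<Sum>j<10. m j) = (\<Sum>j<10. nn j)"
      using split by (intro sum.cong) auto
    with assms(3) show False
      by simp
  qed
  ultimately show ?thesis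
    unfolding reducible_def using assms(2,4) split by (intro exI[of _ m] exI[of _ k]) simp
qed

lemma reducible_if_real_subsum:
  assumes "S \<noteq> {}" and "S \<subseteq> {..<10}" and "\<forall>j\<in>S. nn j > 0"
    and "(\<Sum>j\<in>S. xi ^ j) \<in> \<real>" and "card S < (\<Sum>j<10. nn j)" and "comb nn \<in> \<real>"
  shows "reducible nn"
proof (rule reducibleI[where m = "\<lambda>j. of_bool (j \<in> S)"])
  have "{..<10} \<inter> {j. j \<in> S} = S"
    using assms(2) by blast
  then show "(\<Sum>j<10. of_bool (j \<in> S)) < (\<Sum>j<10. nn j)"
    using assms(5) by simp
  show "\<exists>j<10. of_bool (j \<in> S) \<noteq> (0::nat)"
    using assms(1,2) by auto
  show "\<forall>j<10. of_bool (j \<in> S) \<le> nn j"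
    using assms(3) by (auto simp: Suc_leI)
  show "comb (\<lambda>j. of_bool (j \<in> S)) \<in> \<real>"
    using assms(2,4) comb_indicator by simp
qed (fact assms(6))

lemma real_comb_has_small_real_subsum:
  assumes "comb nn \<in> \<real>" and "(\<Sum>j<10. nn j) > 0"
  obtains S where "S \<noteq> {}" "S \<subseteq> {..<10}" "card S \<le> 2" "\<forall>j\<in>S. nn j > 0"
    "(\<Sum>j\<in>S. xi ^ j) \<in> \<real>"
proof -
  have balanced: "nn 1 + nn 4 = nn 6 + nn 9" "nn 2 + nn 3 = nn 7 + nn 8"
    using assms(1) comb_in_Reals_iff by blast+
  have real_root: "xi ^ j \<in> \<real>" if "j \<in> {0, 5}" for j
    using that by (auto simp: complex_is_Real_iff Im_xi_pow_table)
  have real_pair: "xi ^ i + xi ^ j \<in> \<real>"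
    if "i \<in> {1, 4} \<and> j \<in> {6, 9} \<or> i \<in> {2, 3} \<and> j \<in> {7, 8}" for i j
    using that by (auto simp: complex_is_Real_iff Im_xi_pow_table)
  consider j where "j \<in> {0, 5}" "nn j > 0"
    | i j where "i \<in> {1, 4} \<and> j \<in> {6, 9} \<or> i \<in> {2, 3} \<and> j \<in> {7, 8}" "nn i > 0" "nn j > 0"
  proof -
    have "nn 0 > 0 \<or> nn 5 > 0 \<or> nn 1 + nn 4 > 0 \<and> nn 6 + nn 9 > 0 \<or> nn 2 + nn 3 > 0 \<and> nn 7 + nn 8 > 0"
      using assms(2) balanced unfolding sum_lessThan_10 by linarith
    then show ?thesis
      using that by blast
  qed
  then show ?thesis
  proof cases
    case (1 j)
    then show ?thesis
      using real_root by (intro that[of "{j}"]) auto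
  next
    case (2 i j)
    then have "i \<noteq> j"
      by auto
    then show ?thesis
      using 2 real_pair by (intro that[of "{i, j}"]) auto
  qed
qed

theorem theorem6p6:
  fixes n :: nat and nn :: "nat \<Rightarrow> nat"
  assumes "n \<ge> 3"
    and "(\<Sum>j<10. nn j) = n"
    and "comb nn \<in> \<real>"
  shows "\<exists>m k :: nat \<Rightarrow> nat.
           (\<exists>j<10. m j \<noteq> 0) \<and> (\<exists>j<10. k j \<noteq> 0) \<and>
           (\<forall>j<10. m j + k j = nn j) \<and>
           comb m \<in> \<real> \<and> comb k \<in> \<real>"
proof -
  obtain S where S: "S \<noteq> {}" "S \<subseteq> {..<10}" "card S \<le> 2" "\<forall>j\<in>S. nn j > 0"
    "(\<Sum>j\<in>S. xi ^ j) \<in> \<real>"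
    using real_comb_has_small_real_subsum[OF assms(3)] assms(1,2) by auto
  have "reducible nn"
    using S assms by (intro reducible_if_real_subsum[of S]) auto
  then show ?thesis
    unfolding reducible_def .
qed

end
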